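(* Let $G$ be a finite connected graph with a real structure and let $D$ be a real divisor on $G$. Then $\operatorname{rk}_{\mathbb R}(D)\ge \operatorname{rk}(D)$.
   Context: A finite graph $G$ has vertex set $V(G)$, edge set $E(G)$ and incidence function $\psi$ assigning to each edge a set of one or two vertices (loops and multiple edges allowed). A real structure on $G$ is a pair of involutions of $V(G)$ and $E(G)$, written $v\mapsto\overline v$, $e\mapsto\overline e$, with $\psi(\overline e)=\overline{\psi(e)}$. A divisor is an element $D=\sum_{v}D(v)v$ of the free abelian group $\operatorname{Div}(G)$ on $V(G)$; $D\ge0$ means all $D(v)\ge0$; $\deg D=\sum_v D(v)$. For $f:V(G)\to\mathbb Z$, the principal divisor $\Delta(f)$ is given by $\Delta(f)(v)=\sum_{e\in E(G),\,\psi(e)=\{v,w\}}(f(w)-f(v))$. $D_1\sim D_2$ iff $D_2-D_1=\Delta(f)$ for some $f$. $|D|=\{D'\ge0: D'\sim D\}$. The rank $\operatorname{rk}(D)$ is $-1$ if $|D|=\emptyset$, and otherwise the maximal integer $r$ such that for every effective $E$ of degree $r$ there is $D'\in|D|$ with $D'-E\ge0$. The conjugate divisor is $\overline D(v)=D(\overline v)$; $D$ is real if $\overline D=D$. The real rank $\operatorname{rk}_{\mathbb R}(D)$ of a real divisor $D$ is the maximal integer $r$ such that for every real effective divisor $E$ of degree $r$ there is a real divisor $D'\in|D|$ with $D'-E\ge0$ (with value $-1$ if no such $r\ge0$ exists). *)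

theory Defs
  imports Main
begin

definition graph :: "'v set \<Rightarrow> 'e set \<Rightarrow> ('e \<Rightarrow> 'v set) \<Rightarrow> bool" where
  "graph V E psi \<longleftrightarrow> finite V \<and> finite E \<and>
     (\<forall>e\<in>E. psi e \<subseteq> V \<and> (card (psi e) = 1 \<or> card (psi e) = 2))"

definition adjacent :: "'e set \<Rightarrow> ('e \<Rightarrow> 'v set) \<Rightarrow> 'v \<Rightarrow> 'v \<Rightarrow> bool" where
  "adjacent E psi u w \<longleftrightarrow> (\<exists>e\<in>E. psi e = {u, w})"

definition connected_graph :: "'v set \<Rightarrow> 'e set \<Rightarrow> ('e \<Rightarrow> 'v set) \<Rightarrow> bool" where
  "connected_graph V E psi \<longleftrightarrow> graph V E psi \<and> V \<noteq> {} \<and>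
     (\<forall>u\<in>V. \<forall>w\<in>V. (adjacent E psi)\<^sup>*\<^sup>* u w)"

definition real_structure ::
  "'v set \<Rightarrow> 'e set \<Rightarrow> ('e \<Rightarrow> 'v set) \<Rightarrow> ('v \<Rightarrow> 'v) \<Rightarrow> ('e \<Rightarrow> 'e) \<Rightarrow> bool" where
  "real_structure V E psi cv ce \<longleftrightarrow>
     (\<forall>v\<in>V. cv v \<in> V \<and> cv (cv v) = v) \<and>
     (\<forall>e\<in>E. ce e \<in> E \<and> ce (ce e) = e \<and> psi (ce e) = cv ` psi e)"

definition divisor :: "'v set \<Rightarrow> ('v \<Rightarrow> int) \<Rightarrow> bool" where
  "divisor V D \<longleftrightarrow> (\<forall>v. v \<notin> V \<longrightarrow> D v = 0)"

definition effective :: "'v set \<Rightarrow> ('v \<Rightarrow> int) \<Rightarrow> bool" where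
  "effective V D \<longleftrightarrow> divisor V D \<and> (\<forall>v. D v \<ge> 0)"

definition deg :: "'v set \<Rightarrow> ('v \<Rightarrow> int) \<Rightarrow> int" where
  "deg V D = (\<Sum>v\<in>V. D v)"

definition principal :: "'e set \<Rightarrow> ('e \<Rightarrow> 'v set) \<Rightarrow> ('v \<Rightarrow> int) \<Rightarrow> 'v \<Rightarrow> int" where
  "principal E psi f v =
     (\<Sum>e\<in>{e\<in>E. v \<in> psi e}.
        (if psi e = {v} then 0 else (\<Sum>w\<in>psi e - {v}. f w - f v)))"

definition lin_equiv :: "'e set \<Rightarrow> ('e \<Rightarrow> 'v set) \<Rightarrow> ('v \<Rightarrow> int) \<Rightarrow> ('v \<Rightarrow> int) \<Rightarrow> bool" where
  "lin_equiv E psi D1 D2 \<longleftrightarrow> (\<exists>f. (\<lambda>v. D2 v - D1 v) = principal E psi f)"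

definition linear_system ::
  "'v set \<Rightarrow> 'e set \<Rightarrow> ('e \<Rightarrow> 'v set) \<Rightarrow> ('v \<Rightarrow> int) \<Rightarrow> ('v \<Rightarrow> int) set" where
  "linear_system V E psi D = {D'. effective V D' \<and> lin_equiv E psi D D'}"

definition rank_prop :: "'v set \<Rightarrow> 'e set \<Rightarrow> ('e \<Rightarrow> 'v set) \<Rightarrow> ('v \<Rightarrow> int) \<Rightarrow> nat \<Rightarrow> bool" where
  "rank_prop V E psi D r \<longleftrightarrow>
     (\<forall>F. effective V F \<and> deg V F = int r \<longrightarrow>
        (\<exists>D'\<in>linear_system V E psi D. \<forall>v. D' v - F v \<ge> 0))"

definition rk :: "'v set \<Rightarrow> 'e set \<Rightarrow> ('e \<Rightarrow> 'v set) \<Rightarrow> ('v \<Rightarrow> int) \<Rightarrow> int" where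
  "rk V E psi D =
     (if linear_system V E psi D = {} then -1
      else int (GREATEST r. rank_prop V E psi D r))"

definition real_divisor :: "'v set \<Rightarrow> ('v \<Rightarrow> 'v) \<Rightarrow> ('v \<Rightarrow> int) \<Rightarrow> bool" where
  "real_divisor V cv D \<longleftrightarrow> divisor V D \<and> (\<forall>v\<in>V. D (cv v) = D v)"

definition real_rank_prop ::
  "'v set \<Rightarrow> 'e set \<Rightarrow> ('e \<Rightarrow> 'v set) \<Rightarrow> ('v \<Rightarrow> 'v) \<Rightarrow> ('v \<Rightarrow> int) \<Rightarrow> nat \<Rightarrow> bool" where
  "real_rank_prop V E psi cv D r \<longleftrightarrow>
     (\<forall>F. effective V F \<and> real_divisor V cv F \<and> deg V F = int r \<longrightarrow>
        (\<exists>D'\<in>linear_system V E psi D. real_divisor V cv D' \<and> (\<forall>v. D' v - F v \<ge> 0)))"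

definition real_rk ::
  "'v set \<Rightarrow> 'e set \<Rightarrow> ('e \<Rightarrow> 'v set) \<Rightarrow> ('v \<Rightarrow> 'v) \<Rightarrow> ('v \<Rightarrow> int) \<Rightarrow> int" where
  "real_rk V E psi cv D =
     (if \<not> real_rank_prop V E psi cv D 0 then -1
      else int (GREATEST r. \<forall>s\<le>r. real_rank_prop V E psi cv D s))"

end

theory Submission
  imports Defs
begin

text \<open>
  Suppose \<open>D + \<Delta>(f)\<close> lies in \<open>|D|\<close> and dominates a real effective divisor \<open>F\<close>.
  Replace the potential \<open>f\<close> by its symmetrisation \<open>h = max f (f \<circ> \<sigma>)\<close>.
  At every vertex \<open>v\<close>, \<open>h\<close> dominates both \<open>f\<close> and \<open>f \<circ> \<sigma>\<close> and agrees with one of them at \<open>v\<close>,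
  so \<open>\<Delta>(h)(v)\<close> is at least \<open>\<Delta>(f)(v)\<close> or at least \<open>\<Delta>(f \<circ> \<sigma>)(v) = \<Delta>(f)(\<sigma> v)\<close>;
  as \<open>D\<close> and \<open>F\<close> are real, \<open>D + \<Delta>(h) \<ge> F\<close> in both cases.
  Since \<open>h\<close> is \<open>\<sigma>\<close>-invariant, \<open>D + \<Delta>(h)\<close> is real.
  Hence every real test divisor that \<open>D\<close> can absorb within \<open>|D|\<close> it can also absorb by a real member
  of \<open>|D|\<close>, which gives \<open>rk\<^sub>\<real>(D) \<ge> rk(D)\<close>.
\<close>

definition incidence_term :: "('v \<Rightarrow> int) \<Rightarrow> 'v \<Rightarrow> 'v set \<Rightarrow> int" where
  "incidence_term f v S = (if S = {v} then 0 else (\<Sum>w\<in>S - {v}. f w - f v))"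

lemma principal_eq_sum_incidence_term:
  "principal E psi f v = (\<Sum>e\<in>{e\<in>E. v \<in> psi e}. incidence_term f v (psi e))"
  unfolding principal_def incidence_term_def by simp

lemma principal_eq_0_outside:
  assumes "graph V E psi" "v \<notin> V"
  shows "principal E psi f v = 0"
proof -
  have "{e\<in>E. v \<in> psi e} = {}" using assms unfolding graph_def by blast
  then show ?thesis unfolding principal_eq_sum_incidence_term by (metis sum.empty)
qed

lemma principal_cong:
  assumes "graph V E psi" "\<And>x. x \<in> V \<Longrightarrow> f x = g x"
  shows "principal E psi f v = principal E psi g v"
  unfolding principal_eq_sum_incidence_term
proof (rule sum.cong[OF refl])
  fix e assume "e \<in> {e\<in>E. v \<in> psi e}"
  then have "psi e \<subseteq> V" "v \<in> V" using assms(1) unfolding graph_def by blast+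
  then show "incidence_term f v (psi e) = incidence_term g v (psi e)"
    using assms(2) unfolding incidence_term_def by (auto simp: subset_eq intro!: sum.cong)
qed

lemma principal_mono_at:
  assumes "\<And>x. f x \<le> h x" "h v = f v"
  shows "principal E psi f v \<le> principal E psi h v"
  unfolding principal_eq_sum_incidence_term incidence_term_def
  using assms by (intro sum_mono) (auto intro: sum_mono)

lemma incidence_term_image:
  assumes "inj_on cv (insert v S)"
  shows "incidence_term f (cv v) (cv ` S) = incidence_term (f \<circ> cv) v S"
proof -
  have "cv ` S = {cv v} \<longleftrightarrow> S = {v}"
    using inj_on_image_eq_iff[OF assms, of S "{v}"] by auto
  moreover have "cv ` S - {cv v} = cv ` (S - {v})"
    using assms by (auto simp: inj_on_def)
  moreover have "inj_on cv (S - {v})" using assms by (rule inj_on_subset) auto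
  ultimately show ?thesis
    unfolding incidence_term_def by (simp add: sum.reindex)
qed

lemma principal_conj:
  assumes g: "graph V E psi" and rs: "real_structure V E psi cv ce" and v: "v \<in> V"
  shows "principal E psi f (cv v) = principal E psi (f \<circ> cv) v"
proof -
  let ?Ev = "{e\<in>E. v \<in> psi e}"
  have inj_cv: "inj_on cv V" using rs unfolding real_structure_def inj_on_def by metis
  have inj_ce: "inj_on ce ?Ev"
    using rs unfolding real_structure_def inj_on_def by (metis (no_types, lifting) mem_Collect_eq)
  have "ce ` ?Ev = {e\<in>E. cv v \<in> psi e}"
  proof (intro equalityI subsetI)
    fix e assume "e \<in> {e\<in>E. cv v \<in> psi e}"
    moreover have "cv (cv v) = v" using rs v unfolding real_structure_def by blast
    ultimately have "ce e \<in> ?Ev" "ce (ce e) = e"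
      using rs unfolding real_structure_def by force+
    then show "e \<in> ce ` ?Ev" by (metis image_eqI)
  qed (use rs in \<open>auto simp: real_structure_def\<close>)
  then have "principal E psi f (cv v) = (\<Sum>e\<in>ce ` ?Ev. incidence_term f (cv v) (psi e))"
    unfolding principal_eq_sum_incidence_term by simp
  also have "\<dots> = (\<Sum>e\<in>?Ev. incidence_term f (cv v) (psi (ce e)))"
    by (simp add: sum.reindex[OF inj_ce])
  also have "\<dots> = (\<Sum>e\<in>?Ev. incidence_term (f \<circ> cv) v (psi e))"
  proof (rule sum.cong[OF refl])
    fix e assume e: "e \<in> ?Ev"
    then have "psi (ce e) = cv ` psi e" "insert v (psi e) \<subseteq> V"
      using rs g v unfolding real_structure_def graph_def by auto
    then show "incidence_term f (cv v) (psi (ce e)) = incidence_term (f \<circ> cv) v (psi e)"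
      using incidence_term_image inj_on_subset[OF inj_cv] by metis
  qed
  finally show ?thesis unfolding principal_eq_sum_incidence_term .
qed

lemma sum_incidence_term_edge:
  assumes "card S = 1 \<or> card S = 2"
  shows "(\<Sum>v\<in>S. incidence_term f v S) = 0"
  using assms
proof (elim disjE)
  assume "card S = 1"
  then obtain a where "S = {a}" by (auto simp: card_Suc_eq)
  then show ?thesis by (simp add: incidence_term_def)
next
  assume "card S = 2"
  then obtain a b where "S = {a, b}" "a \<noteq> b" by (auto simp: card_Suc_eq numeral_2_eq_2)
  moreover have "{a, b} - {a} = {b}" "{a, b} - {b} = {a}" using \<open>a \<noteq> b\<close> by auto
  ultimately show ?thesis by (simp add: incidence_term_def doubleton_eq_iff)
qed

text \<open>Each edge contributes opposite amounts to its two endpoints.\<close>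
lemma deg_principal:
  assumes g: "graph V E psi"
  shows "deg V (principal E psi f) = 0"
proof -
  have fin: "finite V" "finite E" using g unfolding graph_def by auto
  have "deg V (principal E psi f)
      = (\<Sum>v\<in>V. \<Sum>e\<in>{e. e \<in> E \<and> v \<in> psi e}. incidence_term f v (psi e))"
    unfolding deg_def principal_eq_sum_incidence_term by simp
  also have "\<dots> = (\<Sum>e\<in>E. \<Sum>v\<in>{v. v \<in> V \<and> v \<in> psi e}. incidence_term f v (psi e))"
    by (rule sum.swap_restrict[OF fin])
  also have "\<dots> = 0"
  proof (rule sum.neutral, rule ballI)
    fix e assume "e \<in> E"
    then have "{v. v \<in> V \<and> v \<in> psi e} = psi e" "card (psi e) = 1 \<or> card (psi e) = 2"
      using g unfolding graph_def by auto
    then show "(\<Sum>v\<in>{v. v \<in> V \<and> v \<in> psi e}. incidence_term f v (psi e)) = 0"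
      using sum_incidence_term_edge by simp
  qed
  finally show ?thesis .
qed

lemma deg_linear_system:
  assumes "graph V E psi" "D' \<in> linear_system V E psi D"
  shows "deg V D' = deg V D"
proof -
  obtain f where "(\<lambda>v. D' v - D v) = principal E psi f"
    using assms(2) unfolding linear_system_def lin_equiv_def by blast
  then have "D' = (\<lambda>v. D v + principal E psi f v)" by (metis diff_add_cancel add.commute)
  then show ?thesis
    using deg_principal[OF assms(1), of f] unfolding deg_def by (simp add: sum.distrib)
qed

lemma principal_sup_conj_dominates:
  assumes g: "graph V E psi" and rs: "real_structure V E psi cv ce"
    and D: "real_divisor V cv D" and F: "real_divisor V cv F"
    and dom: "\<And>v. F v \<le> D v + principal E psi f v" and v: "v \<in> V"
  shows "F v \<le> D v + principal E psi (\<lambda>x. max (f x) (f (cv x))) v"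
    (is "_ \<le> _ + principal E psi ?h v")
proof (cases "f (cv v) \<le> f v")
  case True
  then have "principal E psi f v \<le> principal E psi ?h v"
    by (intro principal_mono_at) auto
  then show ?thesis using dom[of v] by linarith
next
  case False
  then have "principal E psi (f \<circ> cv) v \<le> principal E psi ?h v"
    by (intro principal_mono_at) auto
  moreover have "principal E psi f (cv v) = principal E psi (f \<circ> cv) v"
    by (rule principal_conj[OF g rs v])
  moreover have "D (cv v) = D v" "F (cv v) = F v"
    using D F v unfolding real_divisor_def by auto
  ultimately show ?thesis using dom[of "cv v"] by linarith
qed

lemma principal_real:
  assumes g: "graph V E psi" and rs: "real_structure V E psi cv ce"
    and h: "\<And>x. x \<in> V \<Longrightarrow> h (cv x) = h x" and v: "v \<in> V"
  shows "principal E psi h (cv v) = principal E psi h v"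
  using principal_conj[OF g rs v, of h] principal_cong[OF g, of "h \<circ> cv" h v] h by simp

lemma real_member_of_linear_system:
  assumes g: "graph V E psi" and rs: "real_structure V E psi cv ce"
    and D: "real_divisor V cv D" and F: "effective V F" "real_divisor V cv F"
    and D': "D' \<in> linear_system V E psi D" "\<And>v. F v \<le> D' v"
  shows "\<exists>D''\<in>linear_system V E psi D. real_divisor V cv D'' \<and> (\<forall>v. F v \<le> D'' v)"
proof -
  obtain f where "(\<lambda>v. D' v - D v) = principal E psi f"
    using D'(1) unfolding linear_system_def lin_equiv_def by blast
  then have dom: "\<And>v. F v \<le> D v + principal E psi f v" using D'(2) by (metis add.commute diff_add_cancel)
  define h where "h x = max (f x) (f (cv x))" for x
  define D'' where "D'' v = D v + principal E psi h v" for v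
  have cv: "\<And>x. x \<in> V \<Longrightarrow> cv (cv x) = x" using rs unfolding real_structure_def by blast
  have above: "F v \<le> D'' v" for v
  proof (cases "v \<in> V")
    case True
    then show ?thesis
      using principal_sup_conj_dominates[OF g rs D F(2) dom] unfolding D''_def h_def by blast
  next
    case False
    then show ?thesis using D F principal_eq_0_outside[OF g]
      unfolding D''_def effective_def real_divisor_def divisor_def by simp
  qed
  have "divisor V D''"
    using D principal_eq_0_outside[OF g] unfolding D''_def real_divisor_def divisor_def by simp
  moreover have "D'' (cv v) = D'' v" if "v \<in> V" for v
    using principal_real[OF g rs _ that, of h] D that cv
    unfolding D''_def h_def real_divisor_def by (simp add: max.commute)
  moreover have "effective V D''"
    using \<open>divisor V D''\<close> above F(1) unfolding effective_def by (meson order_trans)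
  moreover have "lin_equiv E psi D D''" unfolding lin_equiv_def D''_def by auto
  ultimately show ?thesis
    using above unfolding linear_system_def real_divisor_def by blast
qed

lemma rank_prop_imp_real_rank_prop:
  assumes "graph V E psi" "real_structure V E psi cv ce" "real_divisor V cv D"
    and "rank_prop V E psi D r"
  shows "real_rank_prop V E psi cv D r"
  using assms real_member_of_linear_system[OF assms(1-3)]
  unfolding rank_prop_def real_rank_prop_def by (metis diff_ge_0_iff_ge)

lemma rank_prop_zero:
  assumes "finite V" "linear_system V E psi D \<noteq> {}"
  shows "rank_prop V E psi D 0"
  unfolding rank_prop_def
proof (intro allI impI)
  fix F assume F: "effective V F \<and> deg V F = int 0"
  then have "F = (\<lambda>_. 0)"
    using sum_nonneg_eq_0_iff[OF assms(1), of F]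
    unfolding effective_def divisor_def deg_def by fastforce
  then show "\<exists>D'\<in>linear_system V E psi D. \<forall>v. D' v - F v \<ge> 0"
    using assms(2) unfolding linear_system_def effective_def by auto
qed

lemma deg_add_at:
  assumes "finite V" "v0 \<in> V"
  shows "deg V (F(v0 := F v0 + c)) = deg V F + c"
  using assms unfolding deg_def by (simp add: sum.remove)

lemma rank_prop_antimono:
  assumes "finite V" "V \<noteq> {}" "rank_prop V E psi D r" "s \<le> r"
  shows "rank_prop V E psi D s"
  unfolding rank_prop_def
proof (intro allI impI)
  fix F assume F: "effective V F \<and> deg V F = int s"
  obtain v0 where v0: "v0 \<in> V" using assms(2) by blast
  define F' where "F' = F(v0 := F v0 + int (r - s))"
  have "effective V F'" "deg V F' = int r"
    using F v0 assms(4) deg_add_at[OF assms(1) v0]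
    unfolding F'_def effective_def divisor_def by auto
  then obtain D' where "D' \<in> linear_system V E psi D" "\<forall>v. F' v \<le> D' v"
    using assms(3) unfolding rank_prop_def by auto
  moreover have "F v \<le> F' v" for v unfolding F'_def by simp
  ultimately show "\<exists>D'\<in>linear_system V E psi D. \<forall>v. D' v - F v \<ge> 0"
    by (meson diff_ge_0_iff_ge order_trans)
qed

text \<open>The real test divisor \<open>k (v\<^sub>0 + \<sigma> v\<^sub>0)\<close> has degree \<open>k\<close> or \<open>2k\<close>, depending on
  whether \<open>\<sigma>\<close> fixes \<open>v\<^sub>0\<close>; hence all degrees up to \<open>2k\<close> are assumed.\<close>
lemma real_rank_prop_bounded:
  assumes g: "graph V E psi" and rs: "real_structure V E psi cv ce" and v0: "v0 \<in> V"
    and R: "\<forall>s\<le>2 * k. real_rank_prop V E psi cv D s"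
  shows "int k \<le> deg V D"
proof -
  have cv: "\<And>x. x \<in> V \<Longrightarrow> cv x \<in> V \<and> cv (cv x) = x" using rs unfolding real_structure_def by blast
  have fin: "finite V" using g unfolding graph_def by blast
  define A where "A = {v0, cv v0}"
  define F where "F v = (if v \<in> A then int k else 0)" for v
  have "A \<subseteq> V" using v0 cv unfolding A_def by auto
  then have "deg V F = int (k * card A)"
    unfolding deg_def F_def by (simp add: sum.If_cases[OF fin] Int_absorb1)
  moreover have "k * card A \<le> 2 * k" unfolding A_def by (cases "v0 = cv v0") auto
  moreover have "effective V F" using \<open>A \<subseteq> V\<close> unfolding F_def effective_def divisor_def by auto
  moreover have "real_divisor V cv F"
    unfolding real_divisor_def
  proof (intro conjI ballI)
    show "divisor V F" using \<open>effective V F\<close> unfolding effective_def by blast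
    fix v assume "v \<in> V"
    then have "cv v \<in> A \<longleftrightarrow> v \<in> A" using cv[OF v0] cv unfolding A_def by (metis insert_iff singleton_iff)
    then show "F (cv v) = F v" unfolding F_def by simp
  qed
  ultimately obtain D' where D': "D' \<in> linear_system V E psi D" "\<forall>v. D' v - F v \<ge> 0"
    using R unfolding real_rank_prop_def by blast
  then have "int k \<le> D' v0" unfolding F_def A_def by (metis diff_ge_0_iff_ge insertI1)
  also have "\<dots> \<le> deg V D'"
    using D'(1) fin v0 unfolding deg_def linear_system_def effective_def
    by (simp add: member_le_sum)
  also have "\<dots> = deg V D" by (rule deg_linear_system[OF g D'(1)])
  finally show ?thesis .
qed

theorem proposition1:
  fixes V :: "'v set" and E :: "'e set" and psi :: "'e \<Rightarrow> 'v set"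
    and cv :: "'v \<Rightarrow> 'v" and ce :: "'e \<Rightarrow> 'e" and D :: "'v \<Rightarrow> int"
  assumes "connected_graph V E psi"
    and "real_structure V E psi cv ce"
    and "real_divisor V cv D"
  shows "real_rk V E psi cv D \<ge> rk V E psi D"
proof (cases "linear_system V E psi D = {}")
  case True
  then show ?thesis unfolding rk_def real_rk_def by simp
next
  case False
  have g: "graph V E psi" and ne: "V \<noteq> {}" and fin: "finite V"
    using assms(1) unfolding connected_graph_def graph_def by auto
  let ?P = "rank_prop V E psi D"
  let ?Q = "\<lambda>r. \<forall>s\<le>r. real_rank_prop V E psi cv D s"
  have P0: "?P 0" by (rule rank_prop_zero[OF fin False])
  have PQ: "?P r \<Longrightarrow> ?Q r" for r
    using rank_prop_imp_real_rank_prop[OF g assms(2,3)] rank_prop_antimono[OF fin ne] by blast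
  obtain v0 where "v0 \<in> V" using ne by blast
  have bounded: "r \<le> 2 * nat (deg V D) + 1" if "?Q r" for r
  proof -
    have "\<forall>s\<le>2 * (r div 2). real_rank_prop V E psi cv D s" using that by auto
    then have "int (r div 2) \<le> deg V D" by (rule real_rank_prop_bounded[OF g assms(2) \<open>v0 \<in> V\<close>])
    then show ?thesis by linarith
  qed
  have "?P (Greatest ?P)" using P0 bounded[OF PQ] by (rule GreatestI_nat[where P = ?P])
  then have "Greatest ?P \<le> Greatest ?Q" by (rule Greatest_le_nat[where P = ?Q, OF PQ bounded])
  moreover have "real_rank_prop V E psi cv D 0" using PQ[OF P0] by blast
  ultimately show ?thesis unfolding rk_def real_rk_def using False by simp
qed

end
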